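(* Let $\omega_1$ be the first uncountable ordinal, and let $(S_\alpha, f_{\alpha\beta})_{\alpha\le\beta\in\omega_1}$ be an inverse system of nonempty sets $S_\alpha$ and surjective maps $f_{\alpha\beta}:S_\beta\to S_\alpha$ (with $f_{\alpha\alpha}=\mathrm{id}$ and $f_{\alpha\beta}f_{\beta\gamma}=f_{\alpha\gamma}$ for $\alpha\le\beta\le\gamma$) whose inverse limit is empty. Let $R$ be a ring and $N$ a left $R$-module. For $\alpha\in\omega_1$ let $\bigoplus_{S_\alpha}N$ be the direct sum of copies of $N$ indexed by $S_\alpha$, and for $\alpha\le\beta$ let $\varphi_{\alpha\beta}:\bigoplus_{S_\beta}N\to\bigoplus_{S_\alpha}N$ send $(x_j)_{j\in S_\beta}$ to $(y_i)_{i\in S_\alpha}$ with $y_i=\sum_{j\in S_\beta,\ f_{\alpha\beta}(j)=i}x_j$. Then each $\varphi_{\alpha\beta}$ is surjective, and the inverse limit of the system $(\bigoplus_{S_\alpha}N,\varphi_{\alpha\beta})$ is the zero module.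
   Context: Rings are associative with unit, modules are unital. Elements of a direct sum have only finitely many nonzero components, so the sums defining $y_i$ are finite in effect. *)

theory Defs
  imports Main "HOL-Library.Countable_Set"
begin

definition left_module :: "('r::ring_1 \<Rightarrow> 'n::ab_group_add \<Rightarrow> 'n) \<Rightarrow> bool" where
  "left_module sc \<longleftrightarrow>
     (\<forall>a x y. sc a (x + y) = sc a x + sc a y) \<and>
     (\<forall>a b x. sc (a + b) x = sc a x + sc b x) \<and>
     (\<forall>a b x. sc (a * b) x = sc a (sc b x)) \<and>
     (\<forall>x. sc 1 x = x)"

definition is_omega1_type :: "'i::wellorder itself \<Rightarrow> bool" where
  "is_omega1_type _ \<longleftrightarrow> \<not> countable (UNIV :: 'i set) \<and> (\<forall>a::'i. countable {b. b < a})"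

definition dirsum :: "'a set \<Rightarrow> ('a \<Rightarrow> 'n::zero) set" where
  "dirsum S = {x. finite {j. x j \<noteq> 0} \<and> (\<forall>j. j \<notin> S \<longrightarrow> x j = 0)}"

text \<open>The induced map: y_i = sum of x_j over j in S_beta with f(j) = i (a finite sum,
  taken over the support of x).\<close>
definition dirsum_map :: "'a set \<Rightarrow> 'a set \<Rightarrow> ('a \<Rightarrow> 'a) \<Rightarrow> ('a \<Rightarrow> 'n::comm_monoid_add) \<Rightarrow> ('a \<Rightarrow> 'n)" where
  "dirsum_map Sa Sb f x = (\<lambda>i. if i \<in> Sa then (\<Sum>j \<in> {j \<in> Sb. f j = i \<and> x j \<noteq> 0}. x j) else 0)"

definition inv_lim :: "('i::order \<Rightarrow> 'a set) \<Rightarrow> ('i \<Rightarrow> 'i \<Rightarrow> 'a \<Rightarrow> 'a) \<Rightarrow> ('i \<Rightarrow> 'a) set" where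
  "inv_lim S f = {s. (\<forall>a. s a \<in> S a) \<and> (\<forall>a b. a \<le> b \<longrightarrow> f a b (s b) = s a)}"

end

theory Submission
  imports Defs
begin

text \<open>
  Surjectivity of the induced maps is proved fibrewise: choosing a section of the
  surjection f, a finitely supported y is hit by the element that puts y(i) at the
  chosen preimage of i.

  For the inverse limit, let s be a compatible family of elements of the direct sums
  and T(b) the (finite) support of s(b).  The support of an image lies in the image of
  the support, so T(a) is contained in f_ab(T(b)) and card T is monotone.  On an
  omega_1-indexed system a monotone nat-valued function is bounded (a countable set of
  indices has an upper bound) and hence eventually constant, from some stage g on.
  Beyond g the maps f_ab restrict to bijections T(b) -> T(a), so if s is nonzero any
  point of T(g) lifts uniquely to a thread, which extended below g by the maps of the
  system is an element of the inverse limit of the sets -- contradicting its emptiness.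
\<close>

lemma support_dirsum_map:
  assumes "dirsum_map Sa Sb f x i \<noteq> 0"
  shows "i \<in> Sa" and "\<exists>j\<in>Sb. f j = i \<and> x j \<noteq> 0"
proof -
  show "i \<in> Sa" using assms by (simp add: dirsum_map_def split: if_splits)
  hence "(\<Sum>j \<in> {j \<in> Sb. f j = i \<and> x j \<noteq> 0}. x j) \<noteq> 0"
    using assms by (simp add: dirsum_map_def)
  hence "{j \<in> Sb. f j = i \<and> x j \<noteq> 0} \<noteq> {}" by (metis sum.empty)
  thus "\<exists>j\<in>Sb. f j = i \<and> x j \<noteq> 0" by blast
qed

lemma dirsum_map_in_dirsum:
  assumes "x \<in> dirsum Sb"
  shows "dirsum_map Sa Sb f x \<in> (dirsum Sa :: ('a \<Rightarrow> 'n::comm_monoid_add) set)"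
proof -
  have "finite {j. x j \<noteq> 0}" using assms by (simp add: dirsum_def)
  hence "finite (f ` {j. x j \<noteq> 0})" by (rule finite_imageI)
  moreover have "{i. dirsum_map Sa Sb f x i \<noteq> 0} \<subseteq> f ` {j. x j \<noteq> 0}"
    by (auto dest!: support_dirsum_map(2))
  ultimately have "finite {i. dirsum_map Sa Sb f x i \<noteq> 0}" by (rule finite_subset[rotated])
  moreover have "dirsum_map Sa Sb f x i = 0" if "i \<notin> Sa" for i
    using that by (simp add: dirsum_map_def)
  ultimately show ?thesis by (simp add: dirsum_def)
qed

lemma dirsum_map_surj:
  assumes su: "f ` Sb = Sa" and y: "y \<in> (dirsum Sa :: ('a \<Rightarrow> 'n::comm_monoid_add) set)"
  shows "y \<in> dirsum_map Sa Sb f ` dirsum Sb"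
proof -
  define g where "g = inv_into Sb f"
  have g: "g i \<in> Sb" "f (g i) = i" if "i \<in> Sa" for i
    using su that by (auto simp: g_def inv_into_into f_inv_into_f)
  have yfin: "finite {i. y i \<noteq> 0}" and y0: "\<And>i. i \<notin> Sa \<Longrightarrow> y i = 0"
    using y by (auto simp: dirsum_def)
  define x where "x j = (if j \<in> g ` Sa then y (f j) else 0)" for j
  have "{j. x j \<noteq> 0} \<subseteq> g ` {i. y i \<noteq> 0}"
    by (auto simp: x_def g)
  hence "finite {j. x j \<noteq> 0}" using yfin finite_subset by blast
  moreover have "\<forall>j. j \<notin> Sb \<longrightarrow> x j = 0" using g by (auto simp: x_def)
  ultimately have xin: "x \<in> dirsum Sb" unfolding dirsum_def by blast
  have fibre: "{j \<in> Sb. f j = i \<and> x j \<noteq> 0} = (if y i = 0 then {} else {g i})"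
    if "i \<in> Sa" for i
    using that g by (auto simp: x_def) (metis g(2))
  have "dirsum_map Sa Sb f x i = y i" for i
  proof (cases "i \<in> Sa")
    case True
    have "x (g i) = y i" using True g by (auto simp: x_def)
    thus ?thesis using True by (simp add: dirsum_map_def fibre)
  qed (simp add: dirsum_map_def y0)
  hence "y = dirsum_map Sa Sb f x" by auto
  thus ?thesis using xin by blast
qed

lemma dirsum_map_image:
  assumes "f ` Sb = Sa"
  shows "dirsum_map Sa Sb f ` dirsum Sb = (dirsum Sa :: ('a \<Rightarrow> 'n::comm_monoid_add) set)"
proof
  show "dirsum_map Sa Sb f ` dirsum Sb \<subseteq> dirsum Sa"
    using dirsum_map_in_dirsum by (rule image_subsetI)
  show "dirsum Sa \<subseteq> dirsum_map Sa Sb f ` dirsum Sb"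
    using dirsum_map_surj[OF assms] by (rule subsetI)
qed

lemma omega1_countable_bounded:
  assumes omega1: "is_omega1_type TYPE('i::wellorder)"
    and A: "countable (A :: 'i set)"
  shows "\<exists>g. \<forall>x\<in>A. x \<le> g"
proof (rule ccontr)
  assume "\<not> ?thesis"
  hence "UNIV = (\<Union>x\<in>A. {y. y < x})" by (auto simp: not_le)
  moreover have "countable (\<Union>x\<in>A. {y. y < x})"
    using A omega1 by (auto simp: is_omega1_type_def)
  ultimately show False using omega1 by (simp add: is_omega1_type_def)
qed

lemma omega1_mono_nat_bounded:
  fixes h :: "'i::wellorder \<Rightarrow> nat"
  assumes omega1: "is_omega1_type TYPE('i)" and "mono h"
  shows "\<exists>M. \<forall>b. h b \<le> M"
proof (rule ccontr)
  assume "\<not> ?thesis"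
  then obtain bs where bs: "\<And>n. n < h (bs n)" by (metis not_le)
  obtain g where "\<And>n. bs n \<le> g"
    using omega1_countable_bounded[OF omega1, of "range bs"] by auto
  hence "h (bs (h g)) \<le> h g" using \<open>mono h\<close> by (simp add: monoD)
  thus False using bs[of "h g"] by simp
qed

lemma mono_bounded_eventually_const:
  fixes h :: "'i::linorder \<Rightarrow> nat"
  assumes "mono h" and M: "\<And>b. h b \<le> M"
  shows "\<exists>g\<ge>a0. \<forall>b\<ge>g. h b = h g"
proof -
  define C where "C = h ` {b. a0 \<le> b}"
  have "finite C" using M by (intro finite_subset[of C "{..M}"]) (auto simp: C_def)
  moreover have "C \<noteq> {}" by (auto simp: C_def)
  ultimately have "Max C \<in> C" by (rule Max_in)
  then obtain g where g: "a0 \<le> g" "h g = Max C" by (auto simp: C_def)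
  have "h b = h g" if "g \<le> b" for b
  proof -
    have "h b \<in> C" using g that by (auto simp: C_def)
    hence "h b \<le> h g" using g \<open>finite C\<close> by simp
    thus ?thesis using monoD[OF \<open>mono h\<close> that] by simp
  qed
  thus ?thesis using g by blast
qed

lemma covering_card_bij:
  assumes "finite B" and "A \<subseteq> f ` B" and "card B \<le> card A"
  shows "bij_betw f B A"
proof -
  have "card (f ` B) \<le> card A" using assms card_image_le le_trans by blast
  hence "A = f ` B" using assms by (intro card_seteq) auto
  moreover have "inj_on f B"
    using assms \<open>A = f ` B\<close> card_image_le eq_card_imp_inj_on le_antisym by metis
  ultimately show ?thesis by (simp add: bij_betw_def)
qed

text \<open>If from stage g on the transition maps restrict to bijections between subsets
  T(b), and T(g) is nonempty, then the inverse limit is nonempty: a point of T(g) lifts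
  uniquely to every later stage and is pushed down by the maps to every earlier one.\<close>
lemma thread_from_eventual_bijections:
  fixes S T :: "'i::linorder \<Rightarrow> 'a set"
  assumes surj: "\<And>a b. a \<le> b \<Longrightarrow> f a b ` S b = S a"
    and comp: "\<And>a b c x. a \<le> b \<Longrightarrow> b \<le> c \<Longrightarrow> x \<in> S c \<Longrightarrow> f a b (f b c x) = f a c x"
    and TS: "\<And>b. T b \<subseteq> S b"
    and bij: "\<And>a b. g \<le> a \<Longrightarrow> a \<le> b \<Longrightarrow> bij_betw (f a b) (T b) (T a)"
    and j0: "j0 \<in> T g"
  shows "inv_lim S f \<noteq> {}"
proof -
  have lift: "\<exists>!j. j \<in> T b \<and> f g b j = j0" if "g \<le> b" for b
  proof -
    have "j0 \<in> f g b ` T b" and "inj_on (f g b) (T b)"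
      using bij[OF order_refl that] j0 by (auto simp: bij_betw_def)
    thus ?thesis by (auto simp: inj_on_def)
  qed
  define t where "t b = (if g \<le> b then (THE j. j \<in> T b \<and> f g b j = j0) else f b g j0)" for b
  have t_lift: "t b \<in> T b" "f g b (t b) = j0" if "g \<le> b" for b
    using theI'[OF lift[OF that]] that by (simp_all add: t_def)
  have t_unique: "t b = j" if "g \<le> b" "j \<in> T b" "f g b j = j0" for b j
    using the1_equality[OF lift[OF that(1)]] that by (simp add: t_def)
  have j0S: "j0 \<in> S g" using j0 TS by blast
  have tS: "t b \<in> S b" for b
  proof (cases "g \<le> b")
    case False
    hence "b \<le> g" by simp
    thus ?thesis using surj[of b g] j0S False by (auto simp: t_def)
  qed (use t_lift TS in blast)
  have "f a b (t b) = t a" if "a \<le> b" for a b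
  proof (cases "g \<le> a")
    case True
    hence gb: "g \<le> b" using that by simp
    have "f a b (t b) \<in> T a" using bij[OF True that] t_lift[OF gb] bij_betwE by blast
    moreover have "f g a (f a b (t b)) = j0" using comp[OF True that tS] t_lift[OF gb] by simp
    ultimately show ?thesis using t_unique[OF True] by simp
  next
    case False
    hence ag: "a \<le> g" and ta: "t a = f a g j0" by (simp_all add: t_def)
    show ?thesis
    proof (cases "g \<le> b")
      case True
      thus ?thesis using comp[OF ag True tS] t_lift(2)[OF True] ta by simp
    next
      case False
      hence "b \<le> g" and "t b = f b g j0" by (simp_all add: t_def)
      thus ?thesis using comp[OF that _ j0S] ta by simp
    qed
  qed
  hence "t \<in> inv_lim S f" using tS by (simp add: inv_lim_def)
  thus ?thesis by blast
qed

lemma dirsum_inv_lim_trivial: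
  fixes S :: "'i::wellorder \<Rightarrow> 'a set"
  assumes omega1: "is_omega1_type TYPE('i)"
    and surj: "\<And>a b. a \<le> b \<Longrightarrow> f a b ` S b = S a"
    and comp: "\<And>a b c x. a \<le> b \<Longrightarrow> b \<le> c \<Longrightarrow> x \<in> S c \<Longrightarrow> f a b (f b c x) = f a c x"
    and empty_lim: "inv_lim S f = {}"
    and s: "s \<in> inv_lim (\<lambda>a. dirsum (S a) :: ('a \<Rightarrow> 'n::comm_monoid_add) set)
                        (\<lambda>a b. dirsum_map (S a) (S b) (f a b))"
  shows "s = (\<lambda>a i. 0)"
proof (rule ccontr)
  assume "s \<noteq> (\<lambda>a i. 0)"
  then obtain a0 i0 where nonzero: "s a0 i0 \<noteq> 0" by (auto simp: fun_eq_iff)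
  define T where "T b = {j. s b j \<noteq> 0}" for b
  have TS: "T b \<subseteq> S b" and Tfin: "finite (T b)" for b
    using s by (auto simp: inv_lim_def dirsum_def T_def)
  have Tsub: "T a \<subseteq> f a b ` T b" if "a \<le> b" for a b
  proof -
    have "T a = {i. dirsum_map (S a) (S b) (f a b) (s b) i \<noteq> 0}"
      using s that by (simp add: inv_lim_def T_def)
    thus ?thesis by (auto dest!: support_dirsum_map(2) simp: T_def)
  qed
  have "card (T a) \<le> card (T b)" if "a \<le> b" for a b
    using card_mono[OF finite_imageI[OF Tfin] Tsub[OF that]] card_image_le[OF Tfin]
    by (rule le_trans)
  hence "mono (\<lambda>b. card (T b))" by (rule monoI)
  then obtain M where "\<And>b. card (T b) \<le> M"
    using omega1_mono_nat_bounded[OF omega1] by blast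
  then obtain g where g: "a0 \<le> g" and const: "\<And>b. g \<le> b \<Longrightarrow> card (T b) = card (T g)"
    using mono_bounded_eventually_const[OF \<open>mono (\<lambda>b. card (T b))\<close>] by blast
  have bij: "bij_betw (f a b) (T b) (T a)" if "g \<le> a" "a \<le> b" for a b
  proof (rule covering_card_bij[OF Tfin Tsub[OF that(2)]])
    show "card (T b) \<le> card (T a)" using const[OF that(1)] const[of b] that by simp
  qed
  obtain j0 where j0: "j0 \<in> T g" using Tsub[OF g] nonzero by (auto simp: T_def)
  have "inv_lim S f \<noteq> {}"
    using thread_from_eventual_bijections[where S=S and f=f and T=T, OF surj comp TS bij j0] .
  thus False using empty_lim by simp
qed

theorem lemma3:
  fixes S :: "'i::wellorder \<Rightarrow> 'a set"
    and f :: "'i \<Rightarrow> 'i \<Rightarrow> 'a \<Rightarrow> 'a"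
    and sc :: "'r::ring_1 \<Rightarrow> 'n::ab_group_add \<Rightarrow> 'n"
  assumes omega1: "is_omega1_type TYPE('i)"
    and nonempty: "\<And>a. S a \<noteq> {}"
    and surj: "\<And>a b. a \<le> b \<Longrightarrow> f a b ` S b = S a"
    and refl: "\<And>a x. x \<in> S a \<Longrightarrow> f a a x = x"
    and comp: "\<And>a b c x. a \<le> b \<Longrightarrow> b \<le> c \<Longrightarrow> x \<in> S c \<Longrightarrow> f a b (f b c x) = f a c x"
    and empty_lim: "inv_lim S f = {}"
    and module: "left_module sc"
  shows "(\<forall>a b. a \<le> b \<longrightarrow> dirsum_map (S a) (S b) (f a b) ` dirsum (S b) = (dirsum (S a) :: ('a \<Rightarrow> 'n) set))
         \<and> inv_lim (\<lambda>a. dirsum (S a) :: ('a \<Rightarrow> 'n) set) (\<lambda>a b. dirsum_map (S a) (S b) (f a b)) = {\<lambda>a i. 0}"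
proof
  show "\<forall>a b. a \<le> b \<longrightarrow> dirsum_map (S a) (S b) (f a b) ` dirsum (S b) = (dirsum (S a) :: ('a \<Rightarrow> 'n) set)"
    using dirsum_map_image[OF surj] by blast
next
  let ?L = "inv_lim (\<lambda>a. dirsum (S a) :: ('a \<Rightarrow> 'n) set) (\<lambda>a b. dirsum_map (S a) (S b) (f a b))"
  show "?L = {\<lambda>a i. 0}"
  proof
    show "?L \<subseteq> {\<lambda>a i. 0}"
    proof
      fix s assume s: "s \<in> ?L"
      show "s \<in> {\<lambda>a i. 0}" using dirsum_inv_lim_trivial[OF omega1 surj comp empty_lim s] by simp
    qed
    show "{\<lambda>a i. 0} \<subseteq> ?L"
      by (simp add: inv_lim_def dirsum_def dirsum_map_def fun_eq_iff)
  qed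
qed

end
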